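(* Let $\mathbf B$ be a polite basis of $\mathscr O=\mathscr O(N)$. Then for each convex polytope $K$ in $Q_{\mathbb R}$, the subspace $\mathscr S(K)$ is spanned by $\mathbf B\cap\mathscr S(K)$.
   Context: Setting. $k$ is a field of characteristic $0$, $G$ a split connected reductive group over $k$ with Borel $B$, maximal torus $T$, simple roots $\{\alpha_i\}_{i\in I}$, root lattice $Q$, $Q_\pm$ the submonoid generated by positive/negative roots, $Q_{\mathbb R}=Q\otimes\mathbb R$, $\operatorname{ht}(\sum c_i\alpha_i)=\sum c_i$. $N$ is the unipotent radical of $B$, $\mathfrak n$ its Lie algebra, $e_i$ a root vector of weight $\alpha_i$, $\mathscr O=\mathscr O(N)=\bigoplus_{\lambda\in Q_-}\mathscr O_\lambda$ (grading from conjugation by $T$), coproduct $\Delta$, identified with the graded dual of $U(\mathfrak n)$ via $\langle x,f\rangle=(x\cdot f)(1_N)$ with $(n\cdot f)(m)=f(mn)$; $\zeta_i\in\mathscr O_{-\alpha_i}$ with $\langle e_i,\zeta_i\rangle=1$. For $f\in\mathscr O_\lambda$, $\underline L(f)$ is the set of $\mu$ such that $\Delta(f)$ has a nonzero component in $\mathscr O_\mu\otimes\mathscr O_{\lambda-\mu}$ and $\underline{\mathrm{Pol}}(f)$ its convex hull. For a convex polytope $K\subset Q_{\mathbb R}$, $\mathscr S(K)$ is the span of the weight vectors $f$ with $\underline{\mathrm{Pol}}(f)\subset K$. Polite bases. For $\theta\in Q_{\mathbb R}^*$, $J_\theta(\lambda)=-(\operatorname{ht}\lambda,\theta(\lambda))$,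 $\Gamma_\theta=J_\theta(Q_-)$, $\mathscr O^\gamma=\bigoplus_{J_\theta(\lambda)=\gamma}\mathscr O_\lambda$; for $\Gamma_\theta$-homogeneous $a$, $L_\theta(a)$ is the set of $\beta$ with nonzero component of $\Delta(a)$ in $\mathscr O^\beta\otimes\mathscr O^{|a|-\beta}$, $R_\theta(a)=|a|-L_\theta(a)$. $\Pi'=\{(r,d): d<0\text{ or }(d=0,r\ge0)\}$, $\Pi''=\{(r,d): d>0\text{ or }(d=0,r\ge0)\}$, $\alpha\le'\beta$ iff $\alpha+\Pi'\subset\beta+\Pi'$, $\alpha\le''\beta$ iff $\alpha+\Pi''\subset\beta+\Pi''$. ${}^\theta F'_\alpha\mathscr O$ (resp. ${}^\theta F''_\beta\mathscr O$) is the span of homogeneous $a$ with $L_\theta(a)\subset\alpha+\Pi'$ (resp. $R_\theta(a)\subset\beta+\Pi''$), associated graded $\mathrm{gr}'$, $\mathrm{gr}''$. $\mathscr O_{[\le0]}={}^\theta F'_0\mathscr O$, $\mathscr O_{[>0]}=\bigoplus_\gamma({}^\theta F'_\gamma\mathscr O\cap\mathscr O^\gamma)$, $\mathscr O_{[\ge0]}={}^\theta F''_0\mathscr O$, $\mathscr O_{[<0]}=\bigoplus_\gamma({}^\theta F''_\gamma\mathscr O\cap\mathscr O^\gamma)$. The algebra isomorphisms $\overline\Delta':\mathrm{gr}'\mathscr O\to\mathscr O_{[>0]}\otimes\mathscr O_{[\le0]}$ and $\overline\Delta'':\mathrm{gr}''\mathscr O\to\mathscr O_{[\ge0]}\otimes\mathscr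 O_{[<0]}$ send the class of homogeneous $a$ in $\mathrm{gr}'_\alpha$ (resp. $\mathrm{gr}''_\beta$) to the component of $\Delta(a)$ in $\mathscr O^\alpha\otimes\mathscr O^{|a|-\alpha}$ (resp. $\mathscr O^{|a|-\beta}\otimes\mathscr O^\beta$). A basis $\mathbf B$ is polite if (i) it consists of weight vectors; (ii) $\zeta_i^n\in\mathbf B$ for all $i,n$; (iii) for every $\theta,\gamma$, ${}^\theta F'_\gamma\mathscr O$ is spanned by $\mathbf B\cap{}^\theta F'_\gamma\mathscr O$ and $\overline\Delta'$ maps the induced basis of $\mathrm{gr}'\mathscr O$ onto the tensor product of the induced bases of $\mathscr O_{[>0]}$, $\mathscr O_{[\le0]}$; (iv) the analogous condition for $F''$ and $\overline\Delta''$. *)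

theory Defs
  imports "HOL-Analysis.Analysis"
begin

text \<open>The unipotent radical N of a Borel subgroup of a split connected reductive group
depends only on the Cartan matrix (a_ij) of the root system, indexed by the simple roots I.\<close>

definition cartan_finite_type :: "'i set \<Rightarrow> ('i \<Rightarrow> 'i \<Rightarrow> int) \<Rightarrow> bool" where
  "cartan_finite_type I A \<longleftrightarrow>
     finite I \<and>
     (\<forall>i\<in>I. A i i = 2) \<and>
     (\<forall>i\<in>I. \<forall>j\<in>I. i \<noteq> j \<longrightarrow> A i j \<le> 0 \<and> (A i j = 0 \<longleftrightarrow> A j i = 0)) \<and>
     (\<exists>d :: 'i \<Rightarrow> real. (\<forall>i\<in>I. d i > 0) \<and>
        (\<forall>i\<in>I. \<forall>j\<in>I. d i * of_int (A i j) = d j * of_int (A j i)) \<and>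
        (\<forall>x :: 'i \<Rightarrow> real. (\<exists>i\<in>I. x i \<noteq> 0) \<longrightarrow>
            (\<Sum>i\<in>I. \<Sum>j\<in>I. d i * of_int (A i j) * x i * x j) > 0))"

definition lin_comb :: "('a \<Rightarrow> 'k::field) set \<Rightarrow> ('a \<Rightarrow> 'k) set" where
  "lin_comb S = {f. \<exists>t c. finite t \<and> t \<subseteq> S \<and> f = (\<lambda>x. \<Sum>b\<in>t. c b * b x)}"

definition lin_indep :: "('a \<Rightarrow> 'k::field) set \<Rightarrow> bool" where
  "lin_indep S \<longleftrightarrow> (\<forall>t c. finite t \<and> t \<subseteq> S \<and> (\<lambda>x. \<Sum>b\<in>t. c b * b x) = (\<lambda>x. 0)
        \<longrightarrow> (\<forall>b\<in>t. c b = 0))"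

text \<open>U(n) is generated by the e_i (i in I) subject to the Serre relations
(ad e_i)^(1-a_ij)(e_j) = 0 (char 0). Its graded dual O(N) is realised as the space of
finitely supported k-valued functions on words in I that vanish on the two-sided ideal
generated by the Serre relations; f(w) is the pairing of f with the monomial e_w.\<close>

definition serre_ok :: "('i \<Rightarrow> 'i \<Rightarrow> int) \<Rightarrow> 'i \<Rightarrow> 'i \<Rightarrow> ('i list \<Rightarrow> 'k::field) \<Rightarrow> bool" where
  "serre_ok A i j f \<longleftrightarrow> (\<forall>u v. let n = nat (1 - A i j) in
      (\<Sum>m\<le>n. (-1) ^ m * of_nat (n choose m) *
           f (u @ replicate (n - m) i @ [j] @ replicate m i @ v)) = 0)"

definition ON :: "'i set \<Rightarrow> ('i \<Rightarrow> 'i \<Rightarrow> int) \<Rightarrow> ('i list \<Rightarrow> 'k::field) set" where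
  "ON I A = {f. finite {w. f w \<noteq> 0} \<and> (\<forall>w. f w \<noteq> 0 \<longrightarrow> set w \<subseteq> I) \<and>
                (\<forall>i\<in>I. \<forall>j\<in>I. i \<noteq> j \<longrightarrow> serre_ok A i j f)}"

text \<open>Product of O(N) (dual to the coproduct of U(n), the e_i being primitive): shuffle product.\<close>

definition shuffle_mult :: "('i list \<Rightarrow> 'k::field) \<Rightarrow> ('i list \<Rightarrow> 'k) \<Rightarrow> 'i list \<Rightarrow> 'k" where
  "shuffle_mult f g w = (\<Sum>S\<in>Pow {0..<length w}. f (nths w S) * g (nths w ({0..<length w} - S)))"

definition unitON :: "'i list \<Rightarrow> 'k::field" where
  "unitON w = (if w = [] then 1 else 0)"

primrec shuffle_pow :: "('i list \<Rightarrow> 'k::field) \<Rightarrow> nat \<Rightarrow> 'i list \<Rightarrow> 'k" where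
  "shuffle_pow f 0 = unitON"
| "shuffle_pow f (Suc n) = shuffle_mult f (shuffle_pow f n)"

definition zeta :: "'i \<Rightarrow> 'i list \<Rightarrow> 'k::field" where
  "zeta i w = (if w = [i] then 1 else 0)"

text \<open>Weight (in Q_-) of the functional dual to the word w: minus the sum of its letters.\<close>
definition wt :: "'i list \<Rightarrow> 'i \<Rightarrow> int" where
  "wt w i = - int (count_list w i)"

definition weight_space :: "'i set \<Rightarrow> ('i \<Rightarrow> 'i \<Rightarrow> int) \<Rightarrow> ('i \<Rightarrow> int) \<Rightarrow> ('i list \<Rightarrow> 'k::field) set" where
  "weight_space I A lam = {f \<in> ON I A. \<forall>w. f w \<noteq> 0 \<longrightarrow> wt w = lam}"

definition weight_vector :: "'i set \<Rightarrow> ('i \<Rightarrow> 'i \<Rightarrow> int) \<Rightarrow> ('i list \<Rightarrow> 'k::field) \<Rightarrow> bool" where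
  "weight_vector I A f \<longleftrightarrow> (\<exists>lam. f \<in> weight_space I A lam)"

text \<open>Underline L(f): the mu such that Delta(f) has a nonzero component in O_mu (x) O_(lam-mu),
i.e. such that f(u v) is nonzero for some words u of weight mu and v.\<close>
definition Lwt :: "('i list \<Rightarrow> 'k::field) \<Rightarrow> ('i \<Rightarrow> int) set" where
  "Lwt f = {wt u | u v. f (u @ v) \<noteq> 0}"

text \<open>Q_R realised as real^'i (coordinates w.r.t. the simple roots).\<close>
definition toQR :: "('i \<Rightarrow> int) \<Rightarrow> real ^ ('i::finite)" where
  "toQR lam = (\<chi> i. of_int (lam i))"

definition Pol :: "('i::finite list \<Rightarrow> 'k::field) \<Rightarrow> (real ^ 'i) set" where
  "Pol f = convex hull (toQR ` Lwt f)"

definition SK :: "'i::finite set \<Rightarrow> ('i \<Rightarrow> 'i \<Rightarrow> int) \<Rightarrow> (real ^ 'i) set \<Rightarrow> ('i list \<Rightarrow> 'k::field) set" where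
  "SK I A K = lin_comb {f \<in> ON I A. weight_vector I A f \<and> Pol f \<subseteq> K}"

definition convex_polytope :: "(real ^ 'i::finite) set \<Rightarrow> bool" where
  "convex_polytope K \<longleftrightarrow> (\<exists>P. finite P \<and> K = convex hull P)"

text \<open>theta in Q_R^* given by its values t i on the simple roots.\<close>
definition Jth :: "'i set \<Rightarrow> ('i \<Rightarrow> real) \<Rightarrow> ('i \<Rightarrow> int) \<Rightarrow> real \<times> real" where
  "Jth I t lam = (- of_int (\<Sum>i\<in>I. lam i), - (\<Sum>i\<in>I. t i * of_int (lam i)))"

definition Ogam :: "'i set \<Rightarrow> ('i \<Rightarrow> 'i \<Rightarrow> int) \<Rightarrow> ('i \<Rightarrow> real) \<Rightarrow> real \<times> real \<Rightarrow> ('i list \<Rightarrow> 'k::field) set" where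
  "Ogam I A t g = {f \<in> ON I A. \<forall>w. f w \<noteq> 0 \<longrightarrow> Jth I t (wt w) = g}"

definition homog :: "'i set \<Rightarrow> ('i \<Rightarrow> 'i \<Rightarrow> int) \<Rightarrow> ('i \<Rightarrow> real) \<Rightarrow> ('i list \<Rightarrow> 'k::field) \<Rightarrow> bool" where
  "homog I A t a \<longleftrightarrow> (\<exists>g. a \<in> Ogam I A t g)"

text \<open>L_theta(a) and R_theta(a) = |a| - L_theta(a).\<close>
definition Lth :: "'i set \<Rightarrow> ('i \<Rightarrow> real) \<Rightarrow> ('i list \<Rightarrow> 'k::field) \<Rightarrow> (real \<times> real) set" where
  "Lth I t a = {Jth I t (wt u) | u v. a (u @ v) \<noteq> 0}"

definition Rth :: "'i set \<Rightarrow> ('i \<Rightarrow> real) \<Rightarrow> ('i list \<Rightarrow> 'k::field) \<Rightarrow> (real \<times> real) set" where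
  "Rth I t a = {Jth I t (wt v) | u v. a (u @ v) \<noteq> 0}"

definition Pi1 :: "(real \<times> real) set" where
  "Pi1 = {(r, d). d < 0 \<or> (d = 0 \<and> r \<ge> 0)}"

definition Pi2 :: "(real \<times> real) set" where
  "Pi2 = {(r, d). d > 0 \<or> (d = 0 \<and> r \<ge> 0)}"

definition shift :: "real \<times> real \<Rightarrow> (real \<times> real) set \<Rightarrow> (real \<times> real) set" where
  "shift g P = (\<lambda>x. g + x) ` P"

definition less1 :: "real \<times> real \<Rightarrow> real \<times> real \<Rightarrow> bool" where
  "less1 a b \<longleftrightarrow> shift a Pi1 \<subseteq> shift b Pi1 \<and> a \<noteq> b"

definition less2 :: "real \<times> real \<Rightarrow> real \<times> real \<Rightarrow> bool" where
  "less2 a b \<longleftrightarrow> shift a Pi2 \<subseteq> shift b Pi2 \<and> a \<noteq> b"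

definition F1 :: "'i set \<Rightarrow> ('i \<Rightarrow> 'i \<Rightarrow> int) \<Rightarrow> ('i \<Rightarrow> real) \<Rightarrow> real \<times> real \<Rightarrow> ('i list \<Rightarrow> 'k::field) set" where
  "F1 I A t g = lin_comb {a \<in> ON I A. homog I A t a \<and> Lth I t a \<subseteq> shift g Pi1}"

definition F2 :: "'i set \<Rightarrow> ('i \<Rightarrow> 'i \<Rightarrow> int) \<Rightarrow> ('i \<Rightarrow> real) \<Rightarrow> real \<times> real \<Rightarrow> ('i list \<Rightarrow> 'k::field) set" where
  "F2 I A t g = lin_comb {a \<in> ON I A. homog I A t a \<and> Rth I t a \<subseteq> shift g Pi2}"

text \<open>Strictly lower filtration pieces (the denominators of gr' and gr'').\<close>
definition F1lt :: "'i set \<Rightarrow> ('i \<Rightarrow> 'i \<Rightarrow> int) \<Rightarrow> ('i \<Rightarrow> real) \<Rightarrow> real \<times> real \<Rightarrow> ('i list \<Rightarrow> 'k::field) set" where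
  "F1lt I A t g = lin_comb (\<Union>{F1 I A t b | b. less1 b g})"

definition F2lt :: "'i set \<Rightarrow> ('i \<Rightarrow> 'i \<Rightarrow> int) \<Rightarrow> ('i \<Rightarrow> real) \<Rightarrow> real \<times> real \<Rightarrow> ('i list \<Rightarrow> 'k::field) set" where
  "F2lt I A t g = lin_comb (\<Union>{F2 I A t b | b. less2 b g})"

definition O_le0 where "O_le0 I A t = F1 I A t 0"
definition O_gt0 where "O_gt0 I A t = lin_comb (\<Union>g. F1 I A t g \<inter> Ogam I A t g)"
definition O_ge0 where "O_ge0 I A t = F2 I A t 0"
definition O_lt0 where "O_lt0 I A t = lin_comb (\<Union>g. F2 I A t g \<inter> Ogam I A t g)"

text \<open>Elements of O (x) O as functions on pairs of words; pure tensors.\<close>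
definition tens :: "('i list \<Rightarrow> 'k::field) \<Rightarrow> ('i list \<Rightarrow> 'k) \<Rightarrow> 'i list \<times> 'i list \<Rightarrow> 'k" where
  "tens x y = (\<lambda>(u, v). x u * y v)"

text \<open>Component of Delta(a) in O^alpha (x) O^(|a|-alpha), resp. O^(|a|-beta) (x) O^beta.\<close>
definition Dbar1 :: "'i set \<Rightarrow> ('i \<Rightarrow> real) \<Rightarrow> real \<times> real \<Rightarrow> ('i list \<Rightarrow> 'k::field) \<Rightarrow> 'i list \<times> 'i list \<Rightarrow> 'k" where
  "Dbar1 I t al a = (\<lambda>(u, v). if Jth I t (wt u) = al then a (u @ v) else 0)"

definition Dbar2 :: "'i set \<Rightarrow> ('i \<Rightarrow> real) \<Rightarrow> real \<times> real \<Rightarrow> ('i list \<Rightarrow> 'k::field) \<Rightarrow> 'i list \<times> 'i list \<Rightarrow> 'k" where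
  "Dbar2 I t be a = (\<lambda>(u, v). if Jth I t (wt v) = be then a (u @ v) else 0)"

text \<open>Induced basis of gr': pairs (alpha, b) with b in B, b in F'_alpha, b not in F'_<alpha
(the class of b in gr'_alpha); likewise for gr''.\<close>
definition ind1 where
  "ind1 I A t B = {(al, b). b \<in> B \<and> b \<in> F1 I A t al \<and> b \<notin> F1lt I A t al}"

definition ind2 where
  "ind2 I A t B = {(be, b). b \<in> B \<and> b \<in> F2 I A t be \<and> b \<notin> F2lt I A t be}"

definition polite :: "'i set \<Rightarrow> ('i \<Rightarrow> 'i \<Rightarrow> int) \<Rightarrow> ('i list \<Rightarrow> 'k::field) set \<Rightarrow> bool" where
  "polite I A B \<longleftrightarrow>
     B \<subseteq> ON I A \<and> lin_indep B \<and> lin_comb B = ON I A \<and>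
     (\<forall>b\<in>B. weight_vector I A b) \<and>
     (\<forall>i\<in>I. \<forall>n. shuffle_pow (zeta i) n \<in> B) \<and>
     (\<forall>t g. F1 I A t g = lin_comb (B \<inter> F1 I A t g)) \<and>
     (\<forall>t. inj_on (\<lambda>(al, b). Dbar1 I t al b) (ind1 I A t B) \<and>
          (\<lambda>(al, b). Dbar1 I t al b) ` ind1 I A t B =
            {tens x y | x y. x \<in> B \<inter> O_gt0 I A t \<and> y \<in> B \<inter> O_le0 I A t}) \<and>
     (\<forall>t g. F2 I A t g = lin_comb (B \<inter> F2 I A t g)) \<and>
     (\<forall>t. inj_on (\<lambda>(be, b). Dbar2 I t be b) (ind2 I A t B) \<and>
          (\<lambda>(be, b). Dbar2 I t be b) ` ind2 I A t B =
            {tens x y | x y. x \<in> B \<inter> O_ge0 I A t \<and> y \<in> B \<inter> O_lt0 I A t})"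

end

theory Submission
  imports Defs
begin

text \<open>Take \<theta> = a for an open half-space {x. c < a \<bullet> x} containing K. A weight vector f lies in
the filtration piece F'_(0,-c) exactly when its weights Lwt f lie in the closed half-space
{x. c \<le> a \<bullet> x}; as K is closed and convex, Pol f \<subseteq> K holds iff f lies in all these pieces.
Politeness says each piece is spanned by the basis vectors it contains, so by linear independence
every basis vector in the expansion of such an f lies in all of them too, hence in S(K).\<close>

lemma lin_combI:
  assumes "finite t" "t \<subseteq> S" "f = (\<lambda>x. \<Sum>b\<in>t. c b * b x)"
  shows "f \<in> lin_comb S"
  using assms unfolding lin_comb_def by blast

lemma lin_combE:
  assumes "f \<in> lin_comb S"
  obtains t c where "finite t" "t \<subseteq> S" "f = (\<lambda>x. \<Sum>b\<in>t. c b * b x)"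
  using assms unfolding lin_comb_def by blast

lemma lin_comb_superset: "x \<in> S \<Longrightarrow> x \<in> lin_comb S"
  by (rule lin_combI[of "{x}" _ _ "\<lambda>_. 1"]) auto

lemma sum_coeffs_extend:
  fixes c :: "('a \<Rightarrow> 'k::field) \<Rightarrow> 'k"
  assumes "finite s" "t \<subseteq> s"
  shows "(\<Sum>b\<in>s. (if b \<in> t then c b else 0) * b x) = (\<Sum>b\<in>t. c b * b x)"
proof -
  have "(\<Sum>b\<in>s. (if b \<in> t then c b else 0) * b x) = (\<Sum>b\<in>s. if b \<in> t then c b * b x else 0)"
    by (rule sum.cong) auto
  also have "\<dots> = (\<Sum>b\<in>s \<inter> t. c b * b x)"
    using assms(1) by (rule sum.inter_restrict[symmetric])
  finally show ?thesis using assms(2) by (simp add: Int_absorb1)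
qed

lemma lin_comb_add:
  assumes "f \<in> lin_comb S" "g \<in> lin_comb S"
  shows "(\<lambda>x. f x + g x) \<in> lin_comb S"
proof -
  obtain t1 c1 where 1: "finite t1" "t1 \<subseteq> S" "f = (\<lambda>x. \<Sum>b\<in>t1. c1 b * b x)"
    using assms(1) by (rule lin_combE)
  obtain t2 c2 where 2: "finite t2" "t2 \<subseteq> S" "g = (\<lambda>x. \<Sum>b\<in>t2. c2 b * b x)"
    using assms(2) by (rule lin_combE)
  let ?c = "\<lambda>b. (if b \<in> t1 then c1 b else 0) + (if b \<in> t2 then c2 b else 0)"
  have "f x + g x = (\<Sum>b\<in>t1 \<union> t2. ?c b * b x)" for x
    using 1 2 by (simp add: distrib_right sum.distrib sum_coeffs_extend)
  then show ?thesis
    using 1 2 by (intro lin_combI[of "t1 \<union> t2" _ _ ?c]) auto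
qed

lemma lin_comb_scale:
  assumes "f \<in> lin_comb S"
  shows "(\<lambda>x. a * f x) \<in> lin_comb S"
proof -
  obtain t c where "finite t" "t \<subseteq> S" "f = (\<lambda>x. \<Sum>b\<in>t. c b * b x)"
    using assms by (rule lin_combE)
  then show ?thesis
    by (intro lin_combI[of t _ _ "\<lambda>b. a * c b"]) (auto simp: sum_distrib_left mult.assoc)
qed

lemma lin_comb_subset_lin_comb:
  assumes "T \<subseteq> lin_comb S"
  shows "lin_comb T \<subseteq> lin_comb S"
proof
  fix f assume "f \<in> lin_comb T"
  then obtain t c where t: "finite t" "t \<subseteq> T" and f: "f = (\<lambda>x. \<Sum>b\<in>t. c b * b x)"
    by (rule lin_combE)
  from t have "(\<lambda>x. \<Sum>b\<in>t. c b * b x) \<in> lin_comb S"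
  proof (induction t rule: finite_induct)
    case empty
    show ?case by (rule lin_combI[of "{}"]) auto
  next
    case (insert y F)
    have "(\<lambda>x. c y * y x + (\<Sum>b\<in>F. c b * b x)) \<in> lin_comb S"
      using insert assms by (intro lin_comb_add[where f = "\<lambda>x. c y * y x"] lin_comb_scale) auto
    with insert show ?case by simp
  qed
  with f show "f \<in> lin_comb S" by simp
qed

lemma lin_comb_nonzero:
  assumes "h \<in> lin_comb S" "h w \<noteq> 0"
  shows "\<exists>s\<in>S. s w \<noteq> 0"
proof -
  obtain t c where "finite t" "t \<subseteq> S" "h = (\<lambda>x. \<Sum>b\<in>t. c b * b x)"
    using assms(1) by (rule lin_combE)
  with assms(2) show ?thesis by (metis (no_types, lifting) subsetD mult_zero_right sum.neutral)
qed

lemma lin_comb_mono: "S \<subseteq> T \<Longrightarrow> lin_comb S \<subseteq> lin_comb T"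
  by (rule lin_comb_subset_lin_comb) (use lin_comb_superset in blast)

lemma lin_comb_eq_lin_comb_inter:
  assumes "G \<subseteq> lin_comb (B \<inter> G)"
  shows "lin_comb G = lin_comb (B \<inter> lin_comb G)"
proof
  have "lin_comb (B \<inter> G) \<subseteq> lin_comb (B \<inter> lin_comb G)"
    by (rule lin_comb_mono) (auto intro: lin_comb_superset)
  with lin_comb_subset_lin_comb[OF assms] show "lin_comb G \<subseteq> lin_comb (B \<inter> lin_comb G)"
    by (rule order_trans)
  show "lin_comb (B \<inter> lin_comb G) \<subseteq> lin_comb G"
    by (rule lin_comb_subset_lin_comb) blast
qed

lemma lin_indepD:
  assumes "lin_indep B" "finite t" "t \<subseteq> B" "(\<lambda>x. \<Sum>b\<in>t. c b * b x) = (\<lambda>x. 0)" "b \<in> t"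
  shows "c b = 0"
  using assms unfolding lin_indep_def by blast

lemma lin_indep_support_subset:
  assumes indep: "lin_indep B" and t: "finite t" "t \<subseteq> B" and nz: "\<forall>b\<in>t. c b \<noteq> 0"
    and f: "f = (\<lambda>x. \<Sum>b\<in>t. c b * b x)" and fV: "f \<in> lin_comb (B \<inter> V)"
  shows "t \<subseteq> V"
proof -
  obtain s d where s: "finite s" "s \<subseteq> B \<inter> V" and fs: "f = (\<lambda>x. \<Sum>b\<in>s. d b * b x)"
    using fV by (rule lin_combE)
  let ?e = "\<lambda>b. (if b \<in> t then c b else 0) - (if b \<in> s then d b else 0)"
  have combination_zero: "(\<lambda>x. \<Sum>b\<in>t \<union> s. ?e b * b x) = (\<lambda>x. 0)"
  proof
    fix x
    have "(\<Sum>b\<in>t \<union> s. ?e b * b x) = (\<Sum>b\<in>t. c b * b x) - (\<Sum>b\<in>s. d b * b x)"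
      using s t by (simp add: left_diff_distrib sum_subtractf sum_coeffs_extend)
    also have "\<dots> = 0" using f fs by (metis right_minus_eq)
    finally show "(\<Sum>b\<in>t \<union> s. ?e b * b x) = 0" .
  qed
  have "finite (t \<union> s)" "t \<union> s \<subseteq> B" using s t by auto
  note coeff_zero = lin_indepD[OF indep this combination_zero]
  have "b \<in> s" if "b \<in> t" for b
  proof (rule ccontr)
    assume "b \<notin> s"
    have "?e b = 0" by (rule coeff_zero) (use that in blast)
    with that \<open>b \<notin> s\<close> nz show False by simp
  qed
  with s show ?thesis by blast
qed

lemma lin_comb_Inter_basis:
  assumes indep: "lin_indep B" and span: "f \<in> lin_comb B"
    and adapted: "\<And>V. V \<in> \<V> \<Longrightarrow> f \<in> V \<and> V = lin_comb (B \<inter> V)"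
  shows "f \<in> lin_comb (B \<inter> \<Inter>\<V>)"
proof -
  obtain t c where t: "finite t" "t \<subseteq> B" and f: "f = (\<lambda>x. \<Sum>b\<in>t. c b * b x)"
    using span by (rule lin_combE)
  define t' where "t' = {b \<in> t. c b \<noteq> 0}"
  have t': "finite t'" "t' \<subseteq> B" using t by (auto simp: t'_def)
  have f': "f = (\<lambda>x. \<Sum>b\<in>t'. c b * b x)"
    unfolding f t'_def using t(1) by (auto intro!: sum.mono_neutral_right)
  have "t' \<subseteq> V" if "V \<in> \<V>" for V
    using adapted[OF that] lin_indep_support_subset[OF indep t' _ f'] by (auto simp: t'_def)
  with t' show ?thesis by (intro lin_combI[OF t'(1) _ f']) auto
qed

lemma ON_letters_subset: "f \<in> ON I A \<Longrightarrow> f w \<noteq> 0 \<Longrightarrow> set w \<subseteq> I"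
  unfolding ON_def by blast

lemma sum_wt_eq_inner_toQR:
  fixes u :: "'i::finite list" and a :: "real ^ 'i"
  assumes "set u \<subseteq> I"
  shows "(\<Sum>i\<in>I. a $ i * of_int (wt u i)) = a \<bullet> toQR (wt u)"
proof -
  have "(\<Sum>i\<in>I. a $ i * of_int (wt u i)) = (\<Sum>i\<in>UNIV. a $ i * of_int (wt u i))"
    using assms by (intro sum.mono_neutral_left) (auto simp: wt_def count_list_0_iff)
  then show ?thesis by (simp add: inner_vec_def toQR_def)
qed

text \<open>The height coordinate of J_\<theta> is \<open>\<ge> 0\<close> on words, so only the \<theta>-coordinate matters.\<close>

lemma Jth_mem_shift_Pi1_iff:
  fixes u :: "'i::finite list" and a :: "real ^ 'i"
  assumes "set u \<subseteq> I"
  shows "Jth I (\<lambda>i. a $ i) (wt u) \<in> shift (0, - c) Pi1 \<longleftrightarrow> c \<le> a \<bullet> toQR (wt u)"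
proof -
  have "Jth I (\<lambda>i. a $ i) (wt u) \<in> shift (0, - c) Pi1 \<longleftrightarrow> Jth I (\<lambda>i. a $ i) (wt u) - (0, - c) \<in> Pi1"
    unfolding shift_def by (metis (no_types, lifting) add_diff_cancel_left' diff_add_cancel image_iff)
  also have "\<dots> \<longleftrightarrow> c \<le> a \<bullet> toQR (wt u)"
    unfolding Pi1_def Jth_def sum_wt_eq_inner_toQR[OF assms, symmetric]
    by (auto simp: wt_def sum_negf intro: sum_nonneg)
  finally show ?thesis .
qed

lemma weight_vector_in_F1_halfspace:
  fixes f :: "'i::finite list \<Rightarrow> 'k::field" and a :: "real ^ 'i"
  assumes f: "f \<in> ON I A" "weight_vector I A f"
    and halfspace: "toQR ` Lwt f \<subseteq> {x. c \<le> a \<bullet> x}"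
  shows "f \<in> F1 I A (\<lambda>i. a $ i) (0, - c)"
  unfolding F1_def
proof (rule lin_comb_superset, intro CollectI conjI)
  obtain lam where "f \<in> weight_space I A lam"
    using f(2) unfolding weight_vector_def by blast
  then have "f \<in> Ogam I A (\<lambda>i. a $ i) (Jth I (\<lambda>i. a $ i) lam)"
    unfolding weight_space_def Ogam_def by auto
  then show "homog I A (\<lambda>i. a $ i) f" unfolding homog_def by blast
  show "Lth I (\<lambda>i. a $ i) f \<subseteq> shift (0, - c) Pi1"
  proof
    fix y assume "y \<in> Lth I (\<lambda>i. a $ i) f"
    then obtain u v where y: "y = Jth I (\<lambda>i. a $ i) (wt u)" and nz: "f (u @ v) \<noteq> 0"
      unfolding Lth_def by blast
    have "set u \<subseteq> I" using ON_letters_subset[OF f(1) nz] by simp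
    moreover have "c \<le> a \<bullet> toQR (wt u)" using halfspace nz unfolding Lwt_def by blast
    ultimately show "y \<in> shift (0, - c) Pi1" unfolding y by (simp add: Jth_mem_shift_Pi1_iff)
  qed
qed (use f in simp)

lemma F1_halfspace_Lwt:
  fixes b :: "'i::finite list \<Rightarrow> 'k::field" and a :: "real ^ 'i"
  assumes "b \<in> F1 I A (\<lambda>i. a $ i) (0, - c)"
  shows "toQR ` Lwt b \<subseteq> {x. c \<le> a \<bullet> x}"
proof
  fix y assume "y \<in> toQR ` Lwt b"
  then obtain u v where y: "y = toQR (wt u)" and "b (u @ v) \<noteq> 0"
    unfolding Lwt_def by blast
  then obtain s :: "'i list \<Rightarrow> 'k" where s: "s \<in> ON I A" "Lth I (\<lambda>i. a $ i) s \<subseteq> shift (0, - c) Pi1"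
    and nz: "s (u @ v) \<noteq> 0"
    using lin_comb_nonzero[OF assms[unfolded F1_def]] by blast
  have "set u \<subseteq> I" using ON_letters_subset[OF s(1) nz] by simp
  moreover have "Jth I (\<lambda>i. a $ i) (wt u) \<in> shift (0, - c) Pi1"
    using s(2) nz unfolding Lth_def by blast
  ultimately show "y \<in> {x. c \<le> a \<bullet> x}" unfolding y by (simp add: Jth_mem_shift_Pi1_iff)
qed

lemma convex_hull_subset_closed_convex:
  fixes S K :: "'a::euclidean_space set"
  assumes "convex K" "closed K"
    and "\<And>a c. K \<subseteq> {x. c < a \<bullet> x} \<Longrightarrow> S \<subseteq> {x. c \<le> a \<bullet> x}"
  shows "convex hull S \<subseteq> K"
proof (rule hull_minimal[where S = convex, OF _ assms(1)], rule subsetI, rule ccontr)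
  fix z assume "z \<in> S" "z \<notin> K"
  then obtain a c where "a \<bullet> z < c" "\<forall>x\<in>K. c < a \<bullet> x"
    using separating_hyperplane_closed_point[OF assms(1,2)] by blast
  with \<open>z \<in> S\<close> assms(3)[of c a] show False by fastforce
qed

lemma Pol_subset_iff_F1_halfspaces:
  fixes f :: "'i::finite list \<Rightarrow> 'k::field" and K :: "(real ^ 'i) set"
  assumes K: "convex K" "closed K" and f: "f \<in> ON I A" "weight_vector I A f"
  shows "Pol f \<subseteq> K \<longleftrightarrow> (\<forall>a c. K \<subseteq> {x. c < a \<bullet> x} \<longrightarrow> f \<in> F1 I A (\<lambda>i. a $ i) (0, - c))"
proof (intro iffI allI impI)
  fix a c assume "Pol f \<subseteq> K" "K \<subseteq> {x. c < a \<bullet> x}"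
  moreover have "toQR ` Lwt f \<subseteq> Pol f" unfolding Pol_def by (rule hull_subset)
  ultimately have "toQR ` Lwt f \<subseteq> {x. c \<le> a \<bullet> x}" by fastforce
  then show "f \<in> F1 I A (\<lambda>i. a $ i) (0, - c)" by (rule weight_vector_in_F1_halfspace[OF f])
next
  assume F1: "\<forall>a c. K \<subseteq> {x. c < a \<bullet> x} \<longrightarrow> f \<in> F1 I A (\<lambda>i. a $ i) (0, - c)"
  show "Pol f \<subseteq> K" unfolding Pol_def
  proof (rule convex_hull_subset_closed_convex[OF K])
    fix a c assume "K \<subseteq> {x. c < a \<bullet> x}"
    with F1 have "f \<in> F1 I A (\<lambda>i. a $ i) (0, - c)" by blast
    then show "toQR ` Lwt f \<subseteq> {x. c \<le> a \<bullet> x}" by (rule F1_halfspace_Lwt)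
  qed
qed

lemma politeD:
  assumes "polite I A B"
  shows "B \<subseteq> ON I A" "lin_indep B" "lin_comb B = ON I A" "\<forall>b\<in>B. weight_vector I A b"
    and "\<forall>t g. F1 I A t g = lin_comb (B \<inter> F1 I A t g)"
  using assms unfolding polite_def by simp_all

theorem proposition3p1:
  fixes I :: "'i::finite set" and A :: "'i \<Rightarrow> 'i \<Rightarrow> int"
    and B :: "('i list \<Rightarrow> 'k::field_char_0) set" and K :: "(real ^ 'i) set"
  assumes "cartan_finite_type I A"
    and "polite I A B"
    and "convex_polytope K"
  shows "SK I A K = lin_comb (B \<inter> SK I A K)"
proof -
  have K: "convex K" "closed K"
    using assms(3) unfolding convex_polytope_def
    by (auto intro: compact_imp_closed finite_imp_compact_convex_hull)
  note B = politeD[OF assms(2)]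
  define \<V> :: "('i list \<Rightarrow> 'k) set set"
    where "\<V> = {F1 I A (\<lambda>i. a $ i) (0, - c) | a c. K \<subseteq> {x. c < a \<bullet> x}}"
  define G :: "('i list \<Rightarrow> 'k) set" where "G = {f \<in> ON I A. weight_vector I A f \<and> Pol f \<subseteq> K}"
  have \<V>_spanned: "V = lin_comb (B \<inter> V)" if "V \<in> \<V>" for V
    using that B(5) unfolding \<V>_def by blast
  have mem_Inter_\<V>: "f \<in> \<Inter>\<V> \<longleftrightarrow> (\<forall>a c. K \<subseteq> {x. c < a \<bullet> x} \<longrightarrow> f \<in> F1 I A (\<lambda>i. a $ i) (0, - c))"
    for f unfolding \<V>_def by blast
  have G_eq: "G = {f \<in> ON I A. weight_vector I A f \<and> f \<in> \<Inter>\<V>}"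
    unfolding G_def mem_Inter_\<V> using Pol_subset_iff_F1_halfspaces[OF K] by blast
  have "G \<subseteq> lin_comb (B \<inter> \<Inter>\<V>)"
    using B(2,3) \<V>_spanned unfolding G_eq by (blast intro: lin_comb_Inter_basis)
  moreover have "B \<inter> \<Inter>\<V> \<subseteq> G"
    using B unfolding G_eq by blast
  ultimately have "G \<subseteq> lin_comb (B \<inter> G)"
    using lin_comb_mono[of "B \<inter> \<Inter>\<V>" "B \<inter> G"] by blast
  then show ?thesis unfolding SK_def G_def[symmetric] by (rule lin_comb_eq_lin_comb_inter)
qed

end
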